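(* Let $\rho_{\min}$ be the predicate defined in every unital C*-algebra $A$ by $\rho_{\min}^A(x)=\inf\{\|x-p\| : p\in A,\ p \text{ a minimal projection}\}$. Then $\rho_{\min}$ is definable (in the language $L_{C^*}$ of unital C*-algebras) in each finite dimensional C*-algebra.
   Context: A projection is $p$ with $p^2=p^*=p$; a nonzero projection $p$ is minimal if every projection $q$ with $qp=q$ satisfies $q=0$ or $q=p$. "Definable" is in the sense of continuous model theory: $\rho_{\min}^A$ is a definable predicate of $\mathrm{Th}_{L_{C^*}}(A)$, i.e. a uniform limit of $L_{C^*}$-formulas evaluated in $A$. *)

theory Defs
  imports "HOL-Analysis.Analysis"
begin

text \<open>A unital C*-algebra is modelled as a type of class real_normed_algebra_1 and
banach (complete, associative, unital, norm 1 = 1, submultiplicative norm), together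
with an involution st and a complex scalar multiplication cs extending the real one.\<close>

definition cstar_alg :: "('a::{real_normed_algebra_1,banach} \<Rightarrow> 'a) \<Rightarrow> (complex \<Rightarrow> 'a \<Rightarrow> 'a) \<Rightarrow> bool" where
  "cstar_alg st cs \<longleftrightarrow>
     (\<forall>r x. cs (complex_of_real r) x = scaleR r x) \<and>
     (\<forall>a b x. cs (a * b) x = cs a (cs b x)) \<and>
     (\<forall>a b x. cs (a + b) x = cs a x + cs b x) \<and>
     (\<forall>a x y. cs a (x + y) = cs a x + cs a y) \<and>
     (\<forall>a x y. cs a (x * y) = cs a x * y) \<and>
     (\<forall>a x y. cs a (x * y) = x * cs a y) \<and>
     (\<forall>a x. norm (cs a x) = cmod a * norm x) \<and>
     (\<forall>x. st (st x) = x) \<and>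
     (\<forall>x y. st (x + y) = st x + st y) \<and>
     (\<forall>x y. st (x * y) = st y * st x) \<and>
     (\<forall>a x. st (cs a x) = cs (cnj a) (st x)) \<and>
     (\<forall>x. norm (st x * x) = (norm x)\<^sup>2)"

definition fin_dim_cstar :: "('a::{real_normed_algebra_1,banach} \<Rightarrow> 'a) \<Rightarrow> (complex \<Rightarrow> 'a \<Rightarrow> 'a) \<Rightarrow> bool" where
  "fin_dim_cstar st cs \<longleftrightarrow> cstar_alg st cs \<and>
     (\<exists>B. finite B \<and> (\<forall>x. \<exists>c. x = (\<Sum>b\<in>B. cs (c b) b)))"

definition is_projection :: "('a::ring_1 \<Rightarrow> 'a) \<Rightarrow> 'a \<Rightarrow> bool" where
  "is_projection st p \<longleftrightarrow> p * p = p \<and> st p = p"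

definition minimal_projection :: "('a::ring_1 \<Rightarrow> 'a) \<Rightarrow> 'a \<Rightarrow> bool" where
  "minimal_projection st p \<longleftrightarrow> is_projection st p \<and> p \<noteq> 0 \<and>
     (\<forall>q. is_projection st q \<and> q * p = q \<longrightarrow> q = 0 \<or> q = p)"

definition rho_min :: "('a::real_normed_algebra_1 \<Rightarrow> 'a) \<Rightarrow> 'a \<Rightarrow> real" where
  "rho_min st x = Inf {norm (x - p) | p. minimal_projection st p}"

datatype tm = Var nat | Zero | One | Add tm tm | Mult tm tm | Star tm | Smult complex tm

datatype fm =
    Atom tm
  | Cst real
  | FUn "real \<Rightarrow> real" fm
  | Bin "real \<Rightarrow> real \<Rightarrow> real" fm fm
  | FSup nat fm                       (* sup over the ball of radius n, binds variable 0 *)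
  | FInf nat fm                       (* inf over the ball of radius n, binds variable 0 *)

primrec tm_eval :: "('a::real_normed_algebra_1 \<Rightarrow> 'a) \<Rightarrow> (complex \<Rightarrow> 'a \<Rightarrow> 'a) \<Rightarrow> (nat \<Rightarrow> 'a) \<Rightarrow> tm \<Rightarrow> 'a" where
  "tm_eval st cs env (Var i) = env i"
| "tm_eval st cs env Zero = 0"
| "tm_eval st cs env One = 1"
| "tm_eval st cs env (Add s t) = tm_eval st cs env s + tm_eval st cs env t"
| "tm_eval st cs env (Mult s t) = tm_eval st cs env s * tm_eval st cs env t"
| "tm_eval st cs env (Star t) = st (tm_eval st cs env t)"
| "tm_eval st cs env (Smult c t) = cs c (tm_eval st cs env t)"

primrec fm_eval :: "('a::real_normed_algebra_1 \<Rightarrow> 'a) \<Rightarrow> (complex \<Rightarrow> 'a \<Rightarrow> 'a) \<Rightarrow> (nat \<Rightarrow> 'a) \<Rightarrow> fm \<Rightarrow> real" where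
  "fm_eval st cs env (Atom t) = norm (tm_eval st cs env t)"
| "fm_eval st cs env (Cst r) = r"
| "fm_eval st cs env (FUn f \<phi>) = f (fm_eval st cs env \<phi>)"
| "fm_eval st cs env (Bin f \<phi> \<psi>) = f (fm_eval st cs env \<phi>) (fm_eval st cs env \<psi>)"
| "fm_eval st cs env (FSup n \<phi>) =
     (SUP y\<in>{y. norm y \<le> real n}. fm_eval st cs (case_nat y env) \<phi>)"
| "fm_eval st cs env (FInf n \<phi>) =
     (INF y\<in>{y. norm y \<le> real n}. fm_eval st cs (case_nat y env) \<phi>)"

primrec wf_fm :: "fm \<Rightarrow> bool" where
  "wf_fm (Atom t) = True"
| "wf_fm (Cst r) = True"
| "wf_fm (FUn f \<phi>) = (continuous_on UNIV f \<and> wf_fm \<phi>)"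
| "wf_fm (Bin f \<phi> \<psi>) = (continuous_on UNIV (\<lambda>(a, b). f a b) \<and> wf_fm \<phi> \<and> wf_fm \<psi>)"
| "wf_fm (FSup n \<phi>) = wf_fm \<phi>"
| "wf_fm (FInf n \<phi>) = wf_fm \<phi>"

text \<open>A unary predicate P on A is definable in A if on every bounded ball (domain D_n)
it is a uniform limit of interpretations of formulas in the free variable 0.\<close>

definition definable_in :: "('a::real_normed_algebra_1 \<Rightarrow> 'a) \<Rightarrow> (complex \<Rightarrow> 'a \<Rightarrow> 'a) \<Rightarrow> ('a \<Rightarrow> real) \<Rightarrow> bool" where
  "definable_in st cs P \<longleftrightarrow>
     (\<forall>n::nat. \<forall>\<epsilon>>0. \<exists>\<phi>. wf_fm \<phi> \<and>
        (\<forall>x env. norm x \<le> real n \<longrightarrow> \<bar>fm_eval st cs (case_nat x env) \<phi> - P x\<bar> \<le> \<epsilon>))"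

end

theory Submission
  imports Defs "HOL-Computational_Algebra.Fundamental_Theorem_Algebra"
begin

text \<open>
  In a finite-dimensional C*-algebra bounded sequences have convergent subsequences, and the set
  \<open>T\<close> of minimal projections is closed: if minimal projections \<open>p\<^sub>n\<close> converge to \<open>p\<close> and \<open>q\<close> is a
  subprojection of \<open>p\<close>, then \<open>p\<^sub>n q p\<^sub>n\<close> lies in the corner of \<open>p\<^sub>n\<close>, whose self-adjoint elements are
  real multiples of \<open>p\<^sub>n\<close> (an argument with minimal polynomials), so \<open>q\<close> is a multiple of \<open>p\<close>.
  By compactness there is a \<open>\<delta> > 0\<close> such that every approximate subprojection \<open>q\<close> (up to \<open>\<delta>\<close>) of
  a minimal projection \<open>p\<close> is within \<open>1/2\<close> of \<open>0\<close> or of \<open>p\<close>. With it one writes down a formula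
  \<open>d(y)\<close> that vanishes on \<open>T\<close> and whose near-zeros converge into \<open>T\<close>; consequently
  \<open>inf\<^sub>y (norm (x - y) + K d(y))\<close> converges to \<open>rho_min x = dist(x, T)\<close> uniformly on bounded sets as
  \<open>K\<close> grows, and these infima are again formulas.
\<close>

locale cstar_algebra =
  fixes st :: "'a::{real_normed_algebra_1,banach} \<Rightarrow> 'a" and cs :: "complex \<Rightarrow> 'a \<Rightarrow> 'a"
  assumes cstar_alg: "cstar_alg st cs"
begin

lemma
  shows cs_of_real: "cs (complex_of_real r) x = r *\<^sub>R x"
    and cs_cs: "cs (a * b) x = cs a (cs b x)"
    and cs_add_left: "cs (a + b) x = cs a x + cs b x"
    and cs_mult_left: "cs a (x * y) = cs a x * y"
    and norm_cs: "norm (cs a x) = cmod a * norm x"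
    and st_st [simp]: "st (st x) = x"
    and st_add: "st (x + y) = st x + st y"
    and st_mult: "st (x * y) = st y * st x"
    and st_cs: "st (cs a x) = cs (cnj a) (st x)"
    and norm_st_mult_self: "norm (st x * x) = (norm x)\<^sup>2"
  using cstar_alg by (simp_all add: cstar_alg_def)

lemma cs_mult_right: "cs a (x * y) = x * cs a y"
  using cstar_alg unfolding cstar_alg_def by blast

lemma cs_uminus_left: "cs (- a) x = - cs a x"
  using cs_add_left[of a "- a" x] cs_of_real[of 0 x] by (simp add: eq_neg_iff_add_eq_0 add.commute)

lemma cs_mult_cs: "cs a x * cs b y = cs (a * b) (x * y)"
proof -
  have "cs a x * cs b y = cs a (x * cs b y)"
    by (simp only: cs_mult_left)
  also have "\<dots> = cs a (cs b (x * y))"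
    by (simp only: cs_mult_right)
  finally show ?thesis
    by (simp only: cs_cs)
qed

lemma st_scaleR: "st (r *\<^sub>R x) = r *\<^sub>R st x"
  using st_cs[of "complex_of_real r" x] by (simp add: cs_of_real)

lemma norm_st [simp]: "norm (st x) = norm x"
proof -
  have le: "norm y \<le> norm (st y)" for y
  proof (cases "y = 0")
    case False
    have "(norm y)\<^sup>2 \<le> norm (st y) * norm y"
      using norm_st_mult_self[of y] norm_mult_ineq[of "st y" y] by simp
    then show ?thesis using False by (simp add: power2_eq_square)
  qed simp
  show ?thesis using le[of x] le[of "st x"] by simp
qed

lemma bounded_linear_st: "bounded_linear st"
  by (rule bounded_linear_intro[of _ 1]) (simp_all add: st_add st_scaleR)

lemmas st_0 [simp] = linear_0[OF bounded_linear.linear[OF bounded_linear_st]]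
  and st_diff = linear_diff[OF bounded_linear.linear[OF bounded_linear_st]]
  and st_minus = linear_neg[OF bounded_linear.linear[OF bounded_linear_st]]
  and tendsto_st = bounded_linear.tendsto[OF bounded_linear_st]

lemma st_1 [simp]: "st 1 = 1"
  using st_mult[of "st 1" 1] by simp

lemma st_mult_self_eq_0_iff: "st x * x = 0 \<longleftrightarrow> x = 0"
  using norm_st_mult_self[of x] by auto

lemma norm_projection: "is_projection st p \<Longrightarrow> norm p = 0 \<or> norm p = 1"
  using norm_st_mult_self[of p] by (auto simp: is_projection_def power2_eq_square)

lemma norm_projection_le_1: "is_projection st p \<Longrightarrow> norm p \<le> 1"
  using norm_projection by force

lemma norm_projection_eq_1: "is_projection st p \<Longrightarrow> p \<noteq> 0 \<Longrightarrow> norm p = 1"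
  using norm_projection by force

lemma norm_minimal_projection: "minimal_projection st p \<Longrightarrow> norm p = 1"
  unfolding minimal_projection_def using norm_projection_eq_1 by blast

lemma subprojection_mult_left:
  assumes "is_projection st q" "is_projection st p" "q * p = q"
  shows "p * q = q"
  using arg_cong[OF assms(3), of st] assms(1,2) by (simp add: st_mult is_projection_def)

lemma is_projection_diff:
  assumes "is_projection st q" "is_projection st p" "q * p = q"
  shows "is_projection st (p - q)"
  using assms subprojection_mult_left[OF assms]
  by (simp add: is_projection_def algebra_simps st_diff)

lemma is_projection_limit:
  assumes proj: "\<And>n. is_projection st (y n)" and lim: "y \<longlonglongrightarrow> p"
  shows "is_projection st p"
proof -
  have "y \<longlonglongrightarrow> p * p"
    using tendsto_mult[OF lim lim] proj by (simp add: is_projection_def)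
  moreover have "y \<longlonglongrightarrow> st p"
    using tendsto_st[OF lim] proj by (simp add: is_projection_def)
  ultimately show ?thesis
    unfolding is_projection_def using LIMSEQ_unique[OF lim] by metis
qed

end

section \<open>Bounded sequences in finite-dimensional spans\<close>

lemma bounded_coeff_outside_closed_span:
  fixes b :: "'a::real_normed_vector"
  assumes "closed (span S)" "b \<notin> span S" "bounded (range x)"
    and in_span: "\<And>n. x n - c n *\<^sub>R b \<in> span S"
  shows "bounded (range c)"
proof -
  define d where "d = infdist b (span S)"
  have "d > 0"
    unfolding d_def using assms(1,2) span_zero by (intro infdist_pos_not_in_closed) auto
  obtain R where R: "\<And>n. norm (x n) \<le> R"
    using \<open>bounded (range x)\<close> unfolding bounded_iff by auto
  have c_bound: "\<bar>c n\<bar> * d \<le> norm (x n)" for n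
  proof (cases "c n = 0")
    case False
    define w where "w = - (1 / c n) *\<^sub>R (x n - c n *\<^sub>R b)"
    have "d \<le> dist b w"
      unfolding d_def w_def using in_span by (intro infdist_le span_scale)
    moreover have "b - w = (1 / c n) *\<^sub>R x n"
      using False by (simp add: w_def scaleR_right_diff_distrib)
    then have "dist b w = norm (x n) / \<bar>c n\<bar>"
      by (simp add: dist_norm)
    ultimately have "d \<le> norm (x n) / \<bar>c n\<bar>"
      by simp
    then show ?thesis
      using False by (simp add: pos_le_divide_eq mult.commute)
  qed simp
  have "\<bar>c n\<bar> \<le> R / d" for n
    using c_bound[of n] R[of n] \<open>d > 0\<close> by (simp add: pos_le_divide_eq)
  then show ?thesis
    unfolding bounded_iff by (intro exI[of _ "R / d"]) auto
qed

lemma bounded_range_diff_scaleR: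
  fixes x :: "'i \<Rightarrow> 'a::real_normed_vector"
  assumes "bounded (range x)" "bounded (range c)"
  shows "bounded (range (\<lambda>n. x n - c n *\<^sub>R b))"
proof -
  obtain R M where R: "\<And>n. norm (x n) \<le> R" and M: "\<And>n. \<bar>c n\<bar> \<le> M"
    using assms unfolding bounded_iff by fastforce
  have "norm (x n - c n *\<^sub>R b) \<le> R + M * norm b" for n
  proof -
    have "norm (x n - c n *\<^sub>R b) \<le> norm (x n) + \<bar>c n\<bar> * norm b"
      by (metis norm_scaleR norm_triangle_ineq4)
    also have "\<dots> \<le> R + M * norm b"
      using R M by (intro add_mono mult_right_mono) auto
    finally show ?thesis .
  qed
  then show ?thesis
    unfolding bounded_iff by blast
qed

definition bounded_seq_compact :: "'a::metric_space set \<Rightarrow> bool" where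
  "bounded_seq_compact T \<longleftrightarrow> (\<forall>x :: nat \<Rightarrow> 'a. range x \<subseteq> T \<and> bounded (range x) \<longrightarrow>
     (\<exists>l\<in>T. \<exists>r. strict_mono r \<and> (x \<circ> r) \<longlonglongrightarrow> l))"

lemma bounded_seq_compactD:
  fixes x :: "nat \<Rightarrow> 'a::metric_space"
  assumes "bounded_seq_compact T" "range x \<subseteq> T" "bounded (range x)"
  shows "\<exists>l\<in>T. \<exists>r. strict_mono r \<and> (x \<circ> r) \<longlonglongrightarrow> l"
  using assms unfolding bounded_seq_compact_def by blast

lemma bounded_seq_compact_imp_closed:
  assumes "bounded_seq_compact T"
  shows "closed T"
  unfolding closed_sequential_limits
proof (intro allI impI, elim conjE)
  fix y l assume y: "\<forall>n. y n \<in> T" and "y \<longlonglongrightarrow> l"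
  have "bounded (range y)"
    using \<open>y \<longlonglongrightarrow> l\<close> by (rule convergent_imp_bounded)
  moreover have "range y \<subseteq> T"
    using y by auto
  ultimately obtain l' r where "l' \<in> T" "strict_mono r" "(y \<circ> r) \<longlonglongrightarrow> l'"
    using bounded_seq_compactD[OF assms, of y] by blast
  moreover have "(y \<circ> r) \<longlonglongrightarrow> l"
    using LIMSEQ_subseq_LIMSEQ[OF \<open>y \<longlonglongrightarrow> l\<close> \<open>strict_mono r\<close>] .
  ultimately show "l \<in> T"
    using LIMSEQ_unique by blast
qed

lemma bounded_seq_compact_span_insert:
  fixes S :: "'a::real_normed_vector set"
  assumes "bounded_seq_compact (span S)"
  shows "bounded_seq_compact (span (insert b S))"
proof (cases "b \<in> span S")
  case True
  then show ?thesis
    using assms by (simp add: span_redundant)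
next
  case False
  show ?thesis
    unfolding bounded_seq_compact_def
  proof (intro allI impI, elim conjE)
    fix x :: "nat \<Rightarrow> 'a"
    assume "range x \<subseteq> span (insert b S)" "bounded (range x)"
    then have "x n \<in> span (insert b S)" for n
      by auto
    then have "\<forall>n. \<exists>k. x n - k *\<^sub>R b \<in> span S"
      by (simp add: span_breakdown_eq)
    then obtain c where c: "\<And>n. x n - c n *\<^sub>R b \<in> span S"
      by metis
    have "bounded (range c)"
      using bounded_coeff_outside_closed_span[OF bounded_seq_compact_imp_closed[OF assms] False
          \<open>bounded (range x)\<close> c] .
    then obtain c0 r1 where r1: "strict_mono r1" "(c \<circ> r1) \<longlonglongrightarrow> c0"
      using bounded_imp_convergent_subsequence by blast
    define v where "v n = x (r1 n) - c (r1 n) *\<^sub>R b" for n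
    have "bounded (range v)"
      using bounded_range_diff_scaleR[OF \<open>bounded (range x)\<close> \<open>bounded (range c)\<close>, of b]
      by (rule bounded_subset) (auto simp: v_def)
    moreover have "range v \<subseteq> span S"
      using c by (auto simp: v_def)
    ultimately obtain v0 r2 where r2: "v0 \<in> span S" "strict_mono r2" "(v \<circ> r2) \<longlonglongrightarrow> v0"
      using bounded_seq_compactD[OF assms, of v] by blast
    have "x \<circ> (r1 \<circ> r2) = (\<lambda>n. (v \<circ> r2) n + (c \<circ> r1 \<circ> r2) n *\<^sub>R b)"
      by (auto simp: v_def)
    also have "\<dots> \<longlonglongrightarrow> v0 + c0 *\<^sub>R b"
      by (intro tendsto_intros r2(3) LIMSEQ_subseq_LIMSEQ[OF r1(2) r2(2)])
    finally have "(x \<circ> (r1 \<circ> r2)) \<longlonglongrightarrow> v0 + c0 *\<^sub>R b" .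
    moreover have "v0 + c0 *\<^sub>R b \<in> span (insert b S)"
      using r2(1) unfolding span_breakdown_eq by (intro exI[of _ c0]) simp
    ultimately show "\<exists>l\<in>span (insert b S). \<exists>r. strict_mono r \<and> (x \<circ> r) \<longlonglongrightarrow> l"
      using strict_mono_o[OF r1(1) r2(2)] by (intro bexI exI conjI)
  qed
qed

lemma bounded_seq_compact_span:
  fixes S :: "'a::real_normed_vector set"
  assumes "finite S"
  shows "bounded_seq_compact (span S)"
  using assms
proof (induction rule: finite_induct)
  case empty
  show ?case
    unfolding bounded_seq_compact_def
  proof (intro allI impI, elim conjE)
    fix x :: "nat \<Rightarrow> 'a"
    assume "range x \<subseteq> span {}"
    then have "x = (\<lambda>_. 0)"
      by auto
    then have "(x \<circ> id) \<longlonglongrightarrow> 0"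
      by simp
    then show "\<exists>l\<in>span {}. \<exists>r. strict_mono r \<and> (x \<circ> r) \<longlonglongrightarrow> l"
      using strict_mono_id span_zero by blast
  qed
next
  case (insert b S)
  show ?case
    using insert.IH by (rule bounded_seq_compact_span_insert)
qed

section \<open>Real polynomials evaluated in a real algebra\<close>

definition aeval :: "real poly \<Rightarrow> 'a::real_algebra_1 \<Rightarrow> 'a" where
  "aeval P h = fold_coeffs (\<lambda>a f. a *\<^sub>R 1 + h * f) P 0"

lemma aeval_0 [simp]: "aeval 0 h = 0"
  by (simp add: aeval_def)

lemma aeval_pCons [simp]: "aeval (pCons a P) h = a *\<^sub>R 1 + h * aeval P h"
  by (cases "P = 0 \<and> a = 0") (auto simp: aeval_def)

lemma aeval_add [simp]: "aeval (P + Q) h = aeval P h + aeval Q h"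
proof (induction P arbitrary: Q)
  case (pCons a P)
  then show ?case by (cases Q) (simp add: algebra_simps)
qed simp

lemma aeval_smult [simp]: "aeval (smult c P) h = c *\<^sub>R aeval P h"
  by (induction P) (simp_all add: algebra_simps)

lemma aeval_diff [simp]: "aeval (P - Q) h = aeval P h - aeval Q h"
  using aeval_add[of P "- Q" h] aeval_smult[of "- 1" Q h] by simp

lemma aeval_mult [simp]: "aeval (P * Q) h = aeval P h * aeval Q h"
  by (induction P) (simp_all add: algebra_simps)

lemma aeval_monom [simp]: "aeval (monom c n) h = c *\<^sub>R h ^ n"
  by (induction n) (simp_all add: monom_Suc monom_0 algebra_simps)

lemma aeval_sum: "aeval (\<Sum>v\<in>T. f v) h = (\<Sum>v\<in>T. aeval (f v) h)"
  by (induction T rule: infinite_finite_induct) simp_all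

lemma mult_aeval_commute: "h * aeval P h = aeval P h * h"
proof (induction P)
  case (pCons a P)
  then show ?case
    by (simp add: algebra_simps) (metis mult.assoc)
qed simp

lemma aeval_real: "aeval P (x :: real) = poly P x"
  by (induction P) simp_all

lemma aeval_complex: "aeval P (z :: complex) = poly (map_poly complex_of_real P) z"
  by (induction P) (auto simp: map_poly_pCons scaleR_conv_of_real)

lemma aeval_of_real: "aeval P (of_real x :: complex) = of_real (aeval P x)"
  by (induction P) (simp_all add: scaleR_conv_of_real)

lemma real_poly_degree_less_2_nonreal_root:
  fixes R :: "real poly"
  assumes "degree R < 2" "Im \<mu> \<noteq> 0" "aeval R \<mu> = 0"
  shows "R = 0"
proof -
  obtain r0 R1 where R1: "R = pCons r0 R1"
    by (cases R) auto
  then have "degree R1 = 0"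
    using assms(1) by (cases "R1 = 0") auto
  then obtain r1 where R_eq: "R = [:r0, r1:]"
    using R1 by (metis degree_eq_zeroE)
  then have "complex_of_real r0 + \<mu> * complex_of_real r1 = 0"
    using assms(3) by (simp add: scaleR_conv_of_real)
  then have "Im \<mu> * r1 = 0" "r0 + Re \<mu> * r1 = 0"
    by (simp_all add: complex_eq_iff)
  then show ?thesis
    using assms(2) R_eq by simp
qed

lemma real_poly_root_or_quadratic_factor:
  fixes P :: "real poly"
  assumes "degree P \<ge> 1"
  shows "(\<exists>l. poly P l = 0) \<or> (\<exists>a b Q. b \<noteq> 0 \<and> P = [:a\<^sup>2 + b\<^sup>2, -2 * a, 1:] * Q)"
proof -
  have "degree (map_poly complex_of_real P) = degree P"
    by (rule degree_map_poly) simp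
  then have "\<not> constant (poly (map_poly complex_of_real P))"
    using assms constant_degree by (metis not_one_le_zero)
  then obtain \<mu> where "poly (map_poly complex_of_real P) \<mu> = 0"
    using fundamental_theorem_of_algebra by blast
  then have P_\<mu>: "aeval P \<mu> = 0" by (simp add: aeval_complex)
  show ?thesis
  proof (cases "Im \<mu> = 0")
    case True
    define x where "x = Re \<mu>"
    have "\<mu> = of_real x"
      using True by (simp add: x_def complex_eq_iff)
    then have "poly P x = 0"
      using P_\<mu> by (simp add: aeval_of_real aeval_real)
    then show ?thesis by blast
  next
    case False
    define D where "D = [:(Re \<mu>)\<^sup>2 + (Im \<mu>)\<^sup>2, -2 * Re \<mu>, 1:]"
    have "aeval D \<mu> = 0"
      unfolding D_def by (simp add: complex_eq_iff power2_eq_square algebra_simps)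
    have "D \<noteq> 0" "degree D = 2"
      unfolding D_def by auto
    have "aeval P \<mu> = aeval (P div D) \<mu> * aeval D \<mu> + aeval (P mod D) \<mu>"
      by (simp only: div_mult_mod_eq flip: aeval_mult aeval_add)
    then have "aeval (P mod D) \<mu> = 0"
      using P_\<mu> \<open>aeval D \<mu> = 0\<close> by simp
    moreover have "degree (P mod D) < 2"
      using degree_mod_less[OF \<open>D \<noteq> 0\<close>, of P] \<open>degree D = 2\<close> by (cases "P mod D = 0") auto
    ultimately have "P mod D = 0"
      using real_poly_degree_less_2_nonreal_root False by blast
    then have "P = D * (P div D)"
      using div_mult_mod_eq[of P D] by (simp add: mult.commute)
    then show ?thesis
      using False unfolding D_def by blast
  qed
qed

lemma exists_annihilating_poly:
  fixes h :: "'a::real_algebra_1" and S :: "'a set"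
  assumes "finite S" "span S = UNIV"
  shows "\<exists>Q. Q \<noteq> 0 \<and> aeval Q h = 0"
proof (cases "inj (\<lambda>i::nat. h ^ i)")
  case False
  then obtain i j where "i \<noteq> j" "h ^ i = h ^ j"
    unfolding inj_def by blast
  moreover have "monom (1 :: real) i \<noteq> monom 1 j"
    using \<open>i \<noteq> j\<close> by (metis coeff_monom zero_neq_one)
  ultimately show ?thesis
    by (intro exI[of _ "monom 1 i - monom 1 j"]) simp
next
  case True
  define W where "W = range (\<lambda>i::nat. h ^ i)"
  have "infinite W" unfolding W_def using True by (simp add: range_inj_infinite)
  then have "dependent W"
    using independent_span_bound[OF assms(1), of W] assms(2) by auto
  then obtain T U where TU: "finite T" "T \<subseteq> W" "(\<Sum>v\<in>T. U v *\<^sub>R v) = 0" "\<exists>v\<in>T. U v \<noteq> 0"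
    unfolding dependent_explicit by blast
  define idx where "idx v = inv (\<lambda>i::nat. h ^ i) v" for v
  have idx: "h ^ idx v = v" if "v \<in> T" for v
    using that TU(2) unfolding idx_def W_def by (auto simp: f_inv_into_f)
  define Q where "Q = (\<Sum>v\<in>T. monom (U v) (idx v))"
  have "aeval Q h = (\<Sum>v\<in>T. U v *\<^sub>R v)"
    unfolding Q_def aeval_sum by (simp add: idx)
  obtain v0 where v0: "v0 \<in> T" "U v0 \<noteq> 0" using TU(4) by blast
  have "coeff Q (idx v0) = (\<Sum>v\<in>T. if v = v0 then U v else 0)"
    unfolding Q_def coeff_sum coeff_monom
    by (intro sum.cong refl) (metis idx v0(1))
  then have "coeff Q (idx v0) \<noteq> 0"
    using v0 TU(1) by simp
  then show ?thesis
    using \<open>aeval Q h = _\<close> TU(3) by (metis coeff_0)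
qed

locale fin_dim_cstar_algebra =
  fixes st :: "'a::{real_normed_algebra_1,banach} \<Rightarrow> 'a" and cs :: "complex \<Rightarrow> 'a \<Rightarrow> 'a"
  assumes fin_dim: "fin_dim_cstar st cs"

sublocale fin_dim_cstar_algebra \<subseteq> cstar_algebra
  using fin_dim by unfold_locales (simp add: fin_dim_cstar_def)

context fin_dim_cstar_algebra
begin

lemma finite_real_spanning_set:
  obtains S :: "'a set" where "finite S" "span S = UNIV"
proof -
  obtain B where "finite B" and B: "\<And>x. \<exists>c. x = (\<Sum>b\<in>B. cs (c b) b)"
    using fin_dim unfolding fin_dim_cstar_def by blast
  have cs_Re_Im: "cs z b = Re z *\<^sub>R b + Im z *\<^sub>R cs \<i> b" for z b
  proof -
    have z: "complex_of_real (Re z) + complex_of_real (Im z) * \<i> = z"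
      by (simp add: complex_eq_iff)
    have "cs z b = cs (complex_of_real (Re z) + complex_of_real (Im z) * \<i>) b"
      by (simp only: z)
    also have "\<dots> = Re z *\<^sub>R b + Im z *\<^sub>R cs \<i> b"
      by (simp add: cs_add_left cs_cs cs_of_real)
    finally show ?thesis .
  qed
  have cs_in_span: "cs z b \<in> span (B \<union> cs \<i> ` B)" if "b \<in> B" for z b
    using that by (simp only: cs_Re_Im[of z b]) (intro span_add span_scale span_base; auto)
  have "x \<in> span (B \<union> cs \<i> ` B)" for x
  proof -
    obtain c where "x = (\<Sum>b\<in>B. cs (c b) b)"
      using B by blast
    then show ?thesis
      using cs_in_span by (simp add: span_sum)
  qed
  then have "span (B \<union> cs \<i> ` B) = UNIV"
    by auto
  then show thesis
    using that[of "B \<union> cs \<i> ` B"] \<open>finite B\<close> by simp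
qed

lemma bounded_seq_convergent_subseq:
  fixes x :: "nat \<Rightarrow> 'a"
  assumes "bounded (range x)"
  obtains l r where "strict_mono r" "(x \<circ> r) \<longlonglongrightarrow> l"
proof -
  obtain S :: "'a set" where "finite S" "span S = UNIV"
    by (rule finite_real_spanning_set)
  then have "bounded_seq_compact (UNIV :: 'a set)"
    using bounded_seq_compact_span[of S] by simp
  then show thesis
    using bounded_seq_compactD[OF _ _ assms] that by blast
qed

lemma bounded_seqs_convergent_subseq:
  fixes x y :: "nat \<Rightarrow> 'a"
  assumes "bounded (range x)" "bounded (range y)"
  obtains r a b where "strict_mono r" "(x \<circ> r) \<longlonglongrightarrow> a" "(y \<circ> r) \<longlonglongrightarrow> b"
proof -
  obtain a r1 where r1: "strict_mono r1" "(x \<circ> r1) \<longlonglongrightarrow> a"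
    using bounded_seq_convergent_subseq[OF assms(1)] by blast
  have "bounded (range (y \<circ> r1))"
    using assms(2) by (rule bounded_subset) auto
  then obtain b r2 where r2: "strict_mono r2" "(y \<circ> r1 \<circ> r2) \<longlonglongrightarrow> b"
    using bounded_seq_convergent_subseq by blast
  have "(x \<circ> (r1 \<circ> r2)) \<longlonglongrightarrow> a"
    using LIMSEQ_subseq_LIMSEQ[OF r1(2) r2(1)] by (simp add: o_assoc)
  then show thesis
    using that strict_mono_o[OF r1(1) r2(1)] r2(2) by (simp add: o_assoc)
qed

lemma dim_psubset_subspace:
  fixes U V :: "'a set"
  assumes "subspace U" "subspace V" "U \<subset> V"
  shows "dim U < dim V"
proof -
  obtain S :: "'a set" where "finite S" "span S = UNIV"
    by (rule finite_real_spanning_set)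
  obtain B :: "'a set" where B: "independent B" "UNIV \<subseteq> span B"
    using basis_exists[of UNIV] by blast
  have "finite B"
    using independent_span_bound[OF \<open>finite S\<close> B(1)] \<open>span S = UNIV\<close> by simp
  interpret fd: finite_dimensional_vector_space "scaleR :: real \<Rightarrow> 'a \<Rightarrow> 'a" B
    by unfold_locales (use \<open>finite B\<close> B in \<open>auto simp: dependent_raw_def span_raw_def\<close>)
  have "span U = U" "span V = V"
    using assms(1,2) span_eq_iff by blast+
  then have "span U \<subset> span V"
    using assms(3) by (simp only:)
  then show ?thesis
    using fd.dim_psubset[of U V] by (simp add: dim_raw_def span_raw_def)
qed

end

section \<open>Self-adjoint elements in the corner of a minimal projection\<close>

context cstar_algebra
begin

lemma st_aeval: "st h = h \<Longrightarrow> st (aeval Q h) = aeval Q h"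
  by (induction Q) (simp_all add: st_add st_scaleR st_mult mult_aeval_commute)

text \<open>The C*-identity for \<open>u + z\<close>: \<open>st (u + z) * (u + z) = u u - z z = 0\<close>.\<close>
lemma skew_part_eq_0_if_squares_eq:
  assumes "st u = u" "st z = - z" "u * z = z * u" "u * u = z * z"
  shows "z = 0"
proof -
  have "st (u + z) * (u + z) = 0"
    using assms by (simp add: st_add algebra_simps)
  then have "u = - z"
    by (simp add: st_mult_self_eq_0_iff eq_neg_iff_add_eq_0)
  then have "z = - z"
    using assms(1,2) by (simp add: st_minus)
  then have "(2::real) *\<^sub>R z = 0"
    by (metis scaleR_2 add.right_inverse)
  then show "z = 0"
    by simp
qed

text \<open>Apply the previous lemma to \<open>u = k y\<close> and \<open>z = i b y\<close>, whose squares agree.\<close>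
lemma sq_add_pos_annihilates_eq_0:
  assumes k: "st k = k" and y: "st y = y" and ky: "k * y = y * k"
    and annihilates: "k * (k * y) + b\<^sup>2 *\<^sub>R y = 0" and "b \<noteq> 0"
  shows "y = 0"
proof -
  define c where "c = \<i> * complex_of_real b"
  define u where "u = k * y"
  define z where "z = cs c y"
  have "st u = u"
    unfolding u_def using k y ky by (simp add: st_mult)
  moreover have "st z = - z"
  proof -
    have "st z = cs (- c) y"
      unfolding z_def c_def using y by (simp add: st_cs)
    then show ?thesis
      by (simp add: z_def cs_uminus_left)
  qed
  moreover have "u * z = z * u"
  proof -
    have "u * z = cs c (u * y)"
      unfolding z_def by (simp add: cs_mult_right)
    also have "u * y = y * u"
      unfolding u_def using ky by (simp add: mult.assoc)
    also have "cs c (y * u) = z * u"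
      unfolding z_def by (simp add: cs_mult_left)
    finally show ?thesis .
  qed
  moreover have "u * u = z * z"
  proof -
    have "u * u = (k * (k * y)) * y"
      unfolding u_def by (metis ky mult.assoc)
    also have "k * (k * y) = - (b\<^sup>2 *\<^sub>R y)"
      using annihilates by (simp add: eq_neg_iff_add_eq_0)
    also have "- (b\<^sup>2 *\<^sub>R y) * y = cs (complex_of_real (- b\<^sup>2)) (y * y)"
      by (simp only: cs_of_real) simp
    also have "complex_of_real (- b\<^sup>2) = c * c"
      unfolding c_def by (simp add: power2_eq_square algebra_simps)
    also have "cs (c * c) (y * y) = z * z"
      unfolding z_def by (rule cs_mult_cs[symmetric])
    finally show ?thesis .
  qed
  ultimately have "z = 0"
    by (rule skew_part_eq_0_if_squares_eq)
  then show "y = 0"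
    using norm_cs[of c y] \<open>b \<noteq> 0\<close> by (simp add: z_def c_def norm_mult)
qed

end

locale minimal_corner = fin_dim_cstar_algebra +
  fixes p h :: "'a::{real_normed_algebra_1,banach}"
  assumes minimal: "minimal_projection st p"
    and selfadjoint: "st h = h" and p_mult_h: "p * h = h" and h_mult_p: "h * p = h"
begin

definition corner_eval :: "real poly \<Rightarrow> 'a" where
  "corner_eval Q = aeval Q h * p"

lemma p_idem: "p * p = p" and st_p: "st p = p" and p_nonzero: "p \<noteq> 0"
  using minimal unfolding minimal_projection_def is_projection_def by auto

lemma p_aeval_commute: "p * aeval Q h = aeval Q h * p"
proof (induction Q)
  case (pCons a Q)
  have "p * (h * aeval Q h) = h * aeval Q h * p"
    by (metis p_mult_h h_mult_p mult.assoc pCons.IH)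
  then show ?case
    by (simp add: algebra_simps)
qed simp

lemma corner_eval_mult: "corner_eval (Q * R) = corner_eval Q * corner_eval R"
proof -
  have "corner_eval Q * corner_eval R = aeval Q h * ((p * aeval R h) * p)"
    by (simp add: corner_eval_def mult.assoc)
  also have "\<dots> = aeval Q h * aeval R h * (p * p)"
    by (simp add: p_aeval_commute mult.assoc)
  finally show ?thesis
    by (simp add: corner_eval_def p_idem)
qed

lemma corner_eval_add: "corner_eval (Q + R) = corner_eval Q + corner_eval R"
  and corner_eval_diff: "corner_eval (Q - R) = corner_eval Q - corner_eval R"
  and corner_eval_smult: "corner_eval (smult c Q) = c *\<^sub>R corner_eval Q"
  and corner_eval_const: "corner_eval [:c:] = c *\<^sub>R p"
  by (simp_all add: corner_eval_def algebra_simps)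

lemma corner_eval_linear: "corner_eval [:- l, 1:] = h - l *\<^sub>R p"
  by (simp add: corner_eval_def algebra_simps h_mult_p)

lemma st_corner_eval: "st (corner_eval Q) = corner_eval Q"
  by (simp add: corner_eval_def st_mult st_aeval selfadjoint st_p p_aeval_commute)

lemma p_mult_corner_eval: "p * corner_eval Q = corner_eval Q"
  unfolding corner_eval_def by (metis mult.assoc p_aeval_commute p_idem)

lemma corner_eval_commute: "corner_eval Q * corner_eval R = corner_eval R * corner_eval Q"
  by (metis corner_eval_mult mult.commute)

lemma subprojection_trivial: "is_projection st e \<Longrightarrow> e * p = e \<Longrightarrow> e = 0 \<or> e = p"
  using minimal unfolding minimal_projection_def by blast

lemma least_annihilator:
  obtains P where "P \<noteq> 0" "corner_eval P = 0" "\<And>Q. Q \<noteq> 0 \<Longrightarrow> degree Q < degree P \<Longrightarrow> corner_eval Q \<noteq> 0"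
proof -
  obtain S :: "'a set" where "finite S" "span S = UNIV"
    by (rule finite_real_spanning_set)
  then obtain Q0 where "Q0 \<noteq> 0" "aeval Q0 h = 0"
    using exists_annihilating_poly by blast
  then have "Q0 \<noteq> 0 \<and> corner_eval Q0 = 0"
    by (simp add: corner_eval_def)
  then obtain P where P: "P \<noteq> 0" "corner_eval P = 0"
    and least: "\<And>Q. Q \<noteq> 0 \<Longrightarrow> corner_eval Q = 0 \<Longrightarrow> degree P \<le> degree Q"
    using ex_has_least_nat[of "\<lambda>Q. Q \<noteq> 0 \<and> corner_eval Q = 0" Q0 degree] by blast
  show thesis
  proof (rule that[OF P])
    fix Q :: "real poly"
    assume "Q \<noteq> 0" "degree Q < degree P"
    then show "corner_eval Q \<noteq> 0"
      using least by fastforce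
  qed
qed

lemma cancel_irreducible_quadratic:
  assumes "b \<noteq> 0" "corner_eval ([:a\<^sup>2 + b\<^sup>2, - 2 * a, 1:] * Q) = 0"
  shows "corner_eval Q = 0"
proof -
  define L where "L = [:- a, 1:]"
  have "[:a\<^sup>2 + b\<^sup>2, - 2 * a, 1:] = L * L + [:b\<^sup>2:]"
    unfolding L_def by (simp add: power2_eq_square algebra_simps)
  then have "corner_eval ((L * L + [:b\<^sup>2:]) * Q) = 0"
    using assms(2) by simp
  then have "(corner_eval L * corner_eval L + b\<^sup>2 *\<^sub>R p) * corner_eval Q = 0"
    by (simp only: corner_eval_mult corner_eval_add corner_eval_const)
  then have "corner_eval L * (corner_eval L * corner_eval Q) + b\<^sup>2 *\<^sub>R corner_eval Q = 0"
    by (simp add: algebra_simps p_mult_corner_eval)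
  then show ?thesis
    using sq_add_pos_annihilates_eq_0[OF st_corner_eval st_corner_eval corner_eval_commute _ \<open>b \<noteq> 0\<close>] by blast
qed

lemma cancel_repeated_factor:
  assumes "corner_eval (L * L * R) = 0"
  shows "corner_eval (L * R) = 0"
proof -
  have "st (corner_eval (L * R)) * corner_eval (L * R) = corner_eval (L * L * R) * corner_eval R"
    by (simp add: st_corner_eval flip: corner_eval_mult) (simp add: ac_simps)
  then show ?thesis
    using assms by (simp add: st_mult_self_eq_0_iff)
qed

text \<open>Modulo the annihilator, \<open>Q\<close> satisfies \<open>Q\<^sup>2 = c Q\<close> with \<open>c = Q(l)\<close>, so \<open>corner_eval Q / c\<close> is a
  projection below \<open>p\<close>.\<close>
lemma simple_root_projection:
  assumes "corner_eval ([:- l, 1:] * Q) = 0" and "poly Q l \<noteq> 0"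
  shows "corner_eval Q = 0 \<or> corner_eval Q = poly Q l *\<^sub>R p"
proof -
  define c where "c = poly Q l"
  obtain R where R: "Q - [:c:] = [:- l, 1:] * R"
    using poly_eq_0_iff_dvd[of "Q - [:c:]" l] by (auto simp: c_def)
  have Q_eq: "Q = [:- l, 1:] * R + [:c:]"
    by (metis R diff_add_cancel)
  have "Q * Q = ([:- l, 1:] * Q) * R + smult c Q"
    by (subst (2) Q_eq) (simp add: algebra_simps)
  then have "corner_eval (Q * Q) = corner_eval ([:- l, 1:] * Q) * corner_eval R + c *\<^sub>R corner_eval Q"
    by (simp only: corner_eval_add corner_eval_mult corner_eval_smult)
  then have "corner_eval Q * corner_eval Q = c *\<^sub>R corner_eval Q"
    using assms(1) by (simp add: corner_eval_mult)
  then have "is_projection st ((1 / c) *\<^sub>R corner_eval Q)"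
    using assms(2) by (simp add: is_projection_def c_def st_scaleR st_corner_eval)
  moreover have "((1 / c) *\<^sub>R corner_eval Q) * p = (1 / c) *\<^sub>R corner_eval Q"
    by (simp add: corner_eval_def mult.assoc p_idem)
  ultimately show ?thesis
    using subprojection_trivial assms(2) by (fastforce simp: c_def)
qed

lemma linear_annihilator_imp_eq_scaleR:
  assumes "corner_eval ([:- l, 1:] * Q) = 0" "Q \<noteq> 0"
    and least: "\<And>R. R \<noteq> 0 \<Longrightarrow> degree R \<le> degree Q \<Longrightarrow> corner_eval R \<noteq> 0"
  shows "h = l *\<^sub>R p"
proof -
  have "corner_eval Q \<noteq> 0"
    using least \<open>Q \<noteq> 0\<close> by simp
  define c where "c = poly Q l"
  have "c \<noteq> 0"
  proof
    assume "c = 0"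
    then obtain R where QR: "Q = [:- l, 1:] * R"
      unfolding c_def poly_eq_0_iff_dvd by (rule dvdE)
    have "corner_eval ([:- l, 1:] * [:- l, 1:] * R) = 0"
      using assms(1) unfolding QR by (simp only: mult.assoc)
    then have "corner_eval Q = 0"
      unfolding QR by (rule cancel_repeated_factor)
    then show False
      using \<open>corner_eval Q \<noteq> 0\<close> by contradiction
  qed
  then have "corner_eval Q = c *\<^sub>R p"
    using simple_root_projection[OF assms(1)] \<open>corner_eval Q \<noteq> 0\<close> unfolding c_def by blast
  then have "corner_eval (Q - [:c:]) = 0"
    by (simp add: corner_eval_diff corner_eval_const)
  moreover have "degree (Q - [:c:]) \<le> degree Q"
    using degree_diff_le_max[of Q "[:c:]"] by simp
  ultimately have "Q = [:c:]"
    using least by (metis eq_iff_diff_eq_0)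
  then have "[:- l, 1:] * Q = smult c [:- l, 1:]"
    by simp
  then have "c *\<^sub>R (h - l *\<^sub>R p) = 0"
    using assms(1) by (simp only: corner_eval_smult corner_eval_linear)
  then show ?thesis
    using \<open>c \<noteq> 0\<close> by simp
qed

text \<open>Take a nonzero \<open>P\<close> of least degree with \<open>corner_eval P = 0\<close>: its real roots are simple and
  it has no irreducible quadratic factor, so it is linear.\<close>
theorem h_eq_scaleR_p: "\<exists>l. h = l *\<^sub>R p"
proof -
  obtain P where P: "P \<noteq> 0" "corner_eval P = 0"
    and P_least: "\<And>Q. Q \<noteq> 0 \<Longrightarrow> degree Q < degree P \<Longrightarrow> corner_eval Q \<noteq> 0"
    using least_annihilator by blast
  have "degree P \<ge> 1"
  proof (rule ccontr)
    assume "\<not> degree P \<ge> 1"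
    then obtain c where "P = [:c:]"
      by (metis degree_eq_zeroE less_one not_le)
    then show False
      using P p_nonzero by (simp add: corner_eval_const)
  qed
  then consider l where "poly P l = 0" | a b Q where "b \<noteq> 0" "P = [:a\<^sup>2 + b\<^sup>2, - 2 * a, 1:] * Q"
    using real_poly_root_or_quadratic_factor by blast
  then show ?thesis
  proof cases
    case (1 l)
    then obtain Q where PQ: "P = [:- l, 1:] * Q"
      unfolding poly_eq_0_iff_dvd by (rule dvdE)
    then have "Q \<noteq> 0"
      using P(1) by auto
    have "degree P = degree [:- l, 1:] + degree Q"
      unfolding PQ by (rule degree_mult_eq) (use \<open>Q \<noteq> 0\<close> in auto)
    have "h = l *\<^sub>R p"
    proof (rule linear_annihilator_imp_eq_scaleR)
      show "corner_eval ([:- l, 1:] * Q) = 0"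
        using P(2) unfolding PQ .
      show "corner_eval R \<noteq> 0" if "R \<noteq> 0" "degree R \<le> degree Q" for R
        using P_least that \<open>degree P = _\<close> by simp
    qed fact
    then show ?thesis ..
  next
    case (2 a b Q)
    define D where "D = [:a\<^sup>2 + b\<^sup>2, - 2 * a, 1:]"
    have "P = D * Q" "D \<noteq> 0" "degree D = 2"
      using 2(2) unfolding D_def by auto
    then have "Q \<noteq> 0" "degree P = 2 + degree Q"
      using P(1) by (auto simp: degree_mult_eq)
    moreover have "corner_eval Q = 0"
      using cancel_irreducible_quadratic[OF 2(1), of a Q] P(2) unfolding 2(2) by blast
    ultimately show ?thesis
      using P_least by simp
  qed
qed

end

context fin_dim_cstar_algebra
begin

lemma corner_eq_scaleR:
  assumes "minimal_projection st p" "st h = h" "p * h = h" "h * p = h"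
  shows "\<exists>l. h = l *\<^sub>R p"
proof -
  interpret minimal_corner st cs p h
    using assms by unfold_locales auto
  show ?thesis
    by (rule h_eq_scaleR_p)
qed

lemma subprojection_of_limit_eq_scaleR:
  assumes min: "\<And>n. minimal_projection st (y n)" and lim: "y \<longlonglongrightarrow> p"
    and q: "is_projection st q" "p * q * p = q"
  shows "\<exists>\<alpha>. q = \<alpha> *\<^sub>R p"
proof -
  have y_proj: "is_projection st (y n)" and y_norm: "norm (y n) = 1" for n
    using min[of n] norm_minimal_projection unfolding minimal_projection_def by auto
  have "\<exists>\<alpha>. y n * q * y n = \<alpha> *\<^sub>R y n" for n
  proof (rule corner_eq_scaleR[OF min])
    have y: "y n * y n = y n" "st (y n) = y n" and "st q = q"
      using y_proj[of n] q(1) by (auto simp: is_projection_def)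
    then show "st (y n * q * y n) = y n * q * y n"
      by (simp add: st_mult mult.assoc)
    show "y n * (y n * q * y n) = y n * q * y n" "y n * q * y n * y n = y n * q * y n"
      using y(1) by (metis mult.assoc)+
  qed
  then obtain \<alpha> where \<alpha>: "\<And>n. y n * q * y n = \<alpha> n *\<^sub>R y n"
    by metis
  have "\<bar>\<alpha> n\<bar> \<le> 1" for n
  proof -
    have "\<bar>\<alpha> n\<bar> = norm (y n * q * y n)"
      using y_norm[of n] by (simp add: \<alpha>)
    also have "\<dots> \<le> norm (y n) * norm q * norm (y n)"
      by (metis norm_mult_ineq mult_right_mono norm_ge_zero order_trans)
    also have "\<dots> \<le> 1"
      using y_norm[of n] norm_projection_le_1[OF q(1)] by simp
    finally show ?thesis .
  qed
  then have "bounded (range \<alpha>)"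
    unfolding bounded_iff by auto
  then obtain \<alpha>0 r where r: "strict_mono r" "(\<alpha> \<circ> r) \<longlonglongrightarrow> \<alpha>0"
    using bounded_imp_convergent_subsequence by blast
  have "(\<lambda>n. y n * q * y n) \<longlonglongrightarrow> p * q * p"
    by (intro tendsto_intros lim)
  then have "(\<lambda>n. \<alpha> (r n) *\<^sub>R y (r n)) \<longlonglongrightarrow> q"
    using LIMSEQ_subseq_LIMSEQ[OF _ r(1)] q(2) by (simp add: \<alpha> o_def)
  moreover have "(\<lambda>n. \<alpha> (r n) *\<^sub>R y (r n)) \<longlonglongrightarrow> \<alpha>0 *\<^sub>R p"
    using tendsto_scaleR[OF r(2) LIMSEQ_subseq_LIMSEQ[OF lim r(1)]] by (simp add: o_def)
  ultimately show ?thesis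
    using LIMSEQ_unique by blast
qed

lemma minimal_projection_limit:
  assumes min: "\<And>n. minimal_projection st (y n)" and lim: "y \<longlonglongrightarrow> p"
  shows "minimal_projection st p"
proof -
  have "is_projection st p"
    using min lim is_projection_limit unfolding minimal_projection_def by blast
  have "(\<lambda>n. norm (y n)) \<longlonglongrightarrow> norm p"
    using tendsto_norm[OF lim] .
  then have "norm p = 1"
    using min norm_minimal_projection by (simp add: LIMSEQ_const_iff)
  have "q = 0 \<or> q = p" if q: "is_projection st q" "q * p = q" for q
  proof -
    have "p * q * p = q"
      using subprojection_mult_left[OF q(1) \<open>is_projection st p\<close> q(2)] q(2) by (simp add: mult.assoc)
    then obtain \<alpha> where \<alpha>: "q = \<alpha> *\<^sub>R p"
      using subprojection_of_limit_eq_scaleR[OF min lim q(1)] by blast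
    then have "(\<alpha> * \<alpha> - \<alpha>) *\<^sub>R p = 0"
      using q(1) \<open>is_projection st p\<close> by (simp add: is_projection_def algebra_simps)
    then have "\<alpha> * \<alpha> - \<alpha> = 0"
      using \<open>norm p = 1\<close> by auto
    then have "\<alpha> = 0 \<or> \<alpha> = 1"
      by (simp add: algebra_simps)
    then show ?thesis
      using \<alpha> by auto
  qed
  then show ?thesis
    unfolding minimal_projection_def using \<open>is_projection st p\<close> \<open>norm p = 1\<close> by auto
qed

text \<open>A nonzero projection \<open>p\<close> of least real dimension of \<open>p A\<close> is minimal.\<close>
lemma minimal_projection_exists: "\<exists>p. minimal_projection st p"
proof -
  define V where "V q = range ((*) q)" for q :: 'a
  have V_subspace: "subspace (V q)" for q
    unfolding V_def
    by (rule linear_subspace_image[OF bounded_linear.linear[OF bounded_linear_mult_right] subspace_UNIV])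
  obtain p where p: "is_projection st p" "p \<noteq> 0"
    and least: "\<And>q. is_projection st q \<and> q \<noteq> 0 \<Longrightarrow> dim (V p) \<le> dim (V q)"
    using ex_has_least_nat[of "\<lambda>q. is_projection st q \<and> q \<noteq> 0" 1 "\<lambda>q. dim (V q)"]
    by (auto simp: is_projection_def)
  have "q = 0 \<or> q = p" if q: "is_projection st q" "q * p = q" for q
  proof (rule ccontr)
    assume nontrivial: "\<not> (q = 0 \<or> q = p)"
    have "p * q = q"
      using subprojection_mult_left[OF q(1) p(1) q(2)] .
    then have "V q \<subseteq> V p"
      unfolding V_def by (metis image_subsetI mult.assoc rangeI)
    moreover have "p \<notin> V q"
    proof
      assume "p \<in> V q"
      then obtain x where "p = q * x"
        unfolding V_def by auto
      then have "q * p = p"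
        using q(1) by (simp add: is_projection_def flip: mult.assoc)
      then show False
        using q(2) nontrivial by simp
    qed
    moreover have "p \<in> V p"
      unfolding V_def by (metis mult_1_right rangeI)
    ultimately have "V q \<subset> V p"
      by blast
    then have "dim (V q) < dim (V p)"
      using V_subspace by (intro dim_psubset_subspace)
    then show False
      using least[of q] q(1) nontrivial by auto
  qed
  then show ?thesis
    unfolding minimal_projection_def using p by blast
qed

end

section \<open>A defect function for minimal projections\<close>

definition proj_defect :: "('a::real_normed_algebra_1 \<Rightarrow> 'a) \<Rightarrow> 'a \<Rightarrow> real" where
  "proj_defect st y = norm (y * y - y) + norm (st y - y)"

definition unit_proj_defect :: "('a::real_normed_algebra_1 \<Rightarrow> 'a) \<Rightarrow> 'a \<Rightarrow> real" where
  "unit_proj_defect st y = proj_defect st y + \<bar>1 - norm y\<bar>"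

definition subproj_defect :: "('a::real_normed_algebra_1 \<Rightarrow> 'a) \<Rightarrow> 'a \<Rightarrow> 'a \<Rightarrow> real" where
  "subproj_defect st q y = proj_defect st q + norm (q * y - q)"

definition dist_trivial :: "'a::real_normed_vector \<Rightarrow> 'a \<Rightarrow> real" where
  "dist_trivial q y = min (norm q) (norm (q - y))"

definition nontriviality_excess :: "real \<Rightarrow> ('a::real_normed_algebra_1 \<Rightarrow> 'a) \<Rightarrow> 'a \<Rightarrow> 'a \<Rightarrow> real" where
  "nontriviality_excess \<delta> st q y = max 0 (dist_trivial q y - 1/2 - subproj_defect st q y / \<delta>)"

definition nonminimality :: "real \<Rightarrow> ('a::real_normed_algebra_1 \<Rightarrow> 'a) \<Rightarrow> 'a \<Rightarrow> real" where
  "nonminimality \<delta> st y = (SUP q\<in>{q. norm q \<le> 1}. nontriviality_excess \<delta> st q y)"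

text \<open>For \<open>\<delta>\<close> with \<open>subproj_threshold \<delta> st\<close> this vanishes on the minimal projections, and
  limits of points where it tends to \<open>0\<close> are minimal projections.\<close>
definition minproj_defect :: "real \<Rightarrow> ('a::real_normed_algebra_1 \<Rightarrow> 'a) \<Rightarrow> 'a \<Rightarrow> real" where
  "minproj_defect \<delta> st y = unit_proj_defect st y + nonminimality \<delta> st y"

definition subproj_threshold :: "real \<Rightarrow> ('a::real_normed_algebra_1 \<Rightarrow> 'a) \<Rightarrow> bool" where
  "subproj_threshold \<delta> st \<longleftrightarrow> \<delta> > 0 \<and>
     (\<forall>p q. minimal_projection st p \<and> norm q \<le> 1 \<and> subproj_defect st q p \<le> \<delta> \<longrightarrow> dist_trivial q p \<le> 1/2)"

definition penalized_dist :: "real \<Rightarrow> nat \<Rightarrow> ('a::real_normed_algebra_1 \<Rightarrow> 'a) \<Rightarrow> 'a \<Rightarrow> real" where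
  "penalized_dist \<delta> K st x = (INF y\<in>{y. norm y \<le> 1}. norm (x - y) + real K * minproj_defect \<delta> st y)"

lemma unit_ball_nonempty: "{q :: 'a::real_normed_vector. norm q \<le> 1} \<noteq> {}"
  by (metis empty_iff mem_Collect_eq norm_zero zero_le_one)

lemma proj_defect_nonneg: "proj_defect st y \<ge> 0"
  and unit_proj_defect_nonneg: "unit_proj_defect st y \<ge> 0"
  and subproj_defect_nonneg: "subproj_defect st q y \<ge> 0"
  and nontriviality_excess_nonneg: "nontriviality_excess \<delta> st q y \<ge> 0"
  by (simp_all add: proj_defect_def unit_proj_defect_def subproj_defect_def nontriviality_excess_def)

lemma nontriviality_excess_le_1:
  assumes "\<delta> > 0" "norm q \<le> 1"
  shows "nontriviality_excess \<delta> st q y \<le> 1"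
proof -
  have "dist_trivial q y \<le> 1"
    using assms(2) by (simp add: dist_trivial_def)
  moreover have "subproj_defect st q y / \<delta> \<ge> 0"
    by (intro divide_nonneg_pos subproj_defect_nonneg assms(1))
  ultimately show ?thesis
    by (simp add: nontriviality_excess_def)
qed

lemma nontriviality_excess_le_nonminimality:
  assumes "\<delta> > 0" "norm q \<le> 1"
  shows "nontriviality_excess \<delta> st q y \<le> nonminimality \<delta> st y"
  unfolding nonminimality_def
proof (rule cSUP_upper)
  show "q \<in> {q. norm q \<le> 1}"
    using assms(2) by simp
  show "bdd_above ((\<lambda>q. nontriviality_excess \<delta> st q y) ` {q. norm q \<le> 1})"
    using nontriviality_excess_le_1[OF assms(1)] by (intro bdd_aboveI2[of _ _ 1]) simp
qed

lemma nonminimality_nonneg: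
  assumes "\<delta> > 0"
  shows "nonminimality \<delta> st y \<ge> 0"
proof -
  have "nontriviality_excess \<delta> st 0 y \<le> nonminimality \<delta> st y"
    using assms by (intro nontriviality_excess_le_nonminimality) auto
  then show ?thesis
    using nontriviality_excess_nonneg[of \<delta> st 0 y] by linarith
qed

lemma minproj_defect_nonneg: "\<delta> > 0 \<Longrightarrow> minproj_defect \<delta> st y \<ge> 0"
  unfolding minproj_defect_def
  using unit_proj_defect_nonneg[of st y] nonminimality_nonneg[where st = st and y = y] by simp

lemma rho_min_le_norm_diff:
  assumes "minimal_projection st p"
  shows "rho_min st x \<le> norm (x - p)"
  unfolding rho_min_def
proof (rule cInf_lower)
  show "norm (x - p) \<in> {norm (x - p) |p. minimal_projection st p}"
    using assms by blast
  show "bdd_below {norm (x - p) |p. minimal_projection st p}"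
    by (rule bdd_belowI[of _ 0]) auto
qed

context cstar_algebra
begin

lemma proj_defect_eq_0_iff: "proj_defect st y = 0 \<longleftrightarrow> is_projection st y"
  unfolding proj_defect_def is_projection_def
  by (smt (verit) norm_ge_zero norm_eq_zero right_minus_eq)

lemma unit_proj_defect_eq_0_iff: "unit_proj_defect st y = 0 \<longleftrightarrow> is_projection st y \<and> y \<noteq> 0"
  using proj_defect_eq_0_iff[of y] proj_defect_nonneg[of st y] norm_projection_eq_1[of y]
  unfolding unit_proj_defect_def by (smt (verit) norm_zero)

lemma subproj_defect_eq_0_iff: "subproj_defect st q y = 0 \<longleftrightarrow> is_projection st q \<and> q * y = q"
  using proj_defect_eq_0_iff[of q] proj_defect_nonneg[of st q]
  unfolding subproj_defect_def by (smt (verit) norm_ge_zero norm_eq_zero right_minus_eq)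

lemma trivial_if_dist_trivial_le_half:
  assumes "is_projection st q" "is_projection st y" "q * y = q" "dist_trivial q y \<le> 1/2"
  shows "q = 0 \<or> q = y"
proof -
  have "norm q = 0 \<or> norm q = 1" "norm (y - q) = 0 \<or> norm (y - q) = 1"
    using norm_projection is_projection_diff[OF assms(1-3)] assms(1) by blast+
  then show ?thesis
    using assms(4) unfolding dist_trivial_def by (auto simp: norm_minus_commute min_def split: if_splits)
qed

lemma tendsto_proj_defect: "y \<longlonglongrightarrow> l \<Longrightarrow> (\<lambda>k. proj_defect st (y k)) \<longlonglongrightarrow> proj_defect st l"
  unfolding proj_defect_def by (intro tendsto_intros tendsto_st)

lemma tendsto_unit_proj_defect: "y \<longlonglongrightarrow> l \<Longrightarrow> (\<lambda>k. unit_proj_defect st (y k)) \<longlonglongrightarrow> unit_proj_defect st l"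
  unfolding unit_proj_defect_def by (intro tendsto_intros tendsto_proj_defect)

lemma tendsto_subproj_defect:
  "q \<longlonglongrightarrow> q0 \<Longrightarrow> y \<longlonglongrightarrow> l \<Longrightarrow> (\<lambda>k. subproj_defect st (q k) (y k)) \<longlonglongrightarrow> subproj_defect st q0 l"
  unfolding subproj_defect_def by (intro tendsto_intros tendsto_proj_defect)

lemma tendsto_dist_trivial:
  "q \<longlonglongrightarrow> q0 \<Longrightarrow> y \<longlonglongrightarrow> l \<Longrightarrow> (\<lambda>k. dist_trivial (q k) (y k)) \<longlonglongrightarrow> dist_trivial q0 l"
  unfolding dist_trivial_def by (intro tendsto_intros)

lemma tendsto_nontriviality_excess:
  "y \<longlonglongrightarrow> l \<Longrightarrow> (\<lambda>k. nontriviality_excess \<delta> st q (y k)) \<longlonglongrightarrow> nontriviality_excess \<delta> st q l"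
  unfolding nontriviality_excess_def divide_inverse
  by (intro tendsto_intros tendsto_dist_trivial tendsto_subproj_defect)

lemma minproj_defect_minimal_projection:
  assumes "subproj_threshold \<delta> st" "minimal_projection st p"
  shows "minproj_defect \<delta> st p = 0"
proof -
  have "\<delta> > 0"
    using assms(1) unfolding subproj_threshold_def by blast
  have excess_0: "nontriviality_excess \<delta> st q p = 0" if "norm q \<le> 1" for q
  proof (cases "subproj_defect st q p \<le> \<delta>")
    case True
    then have "dist_trivial q p \<le> 1/2"
      using assms that unfolding subproj_threshold_def by blast
    moreover have "subproj_defect st q p / \<delta> \<ge> 0"
      by (intro divide_nonneg_pos subproj_defect_nonneg \<open>\<delta> > 0\<close>)
    ultimately show ?thesis
      by (simp add: nontriviality_excess_def max_def)
  next
    case False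
    then have "subproj_defect st q p / \<delta> > 1"
      using \<open>\<delta> > 0\<close> by simp
    moreover have "dist_trivial q p \<le> 1"
      using that by (simp add: dist_trivial_def)
    ultimately show ?thesis
      by (simp add: nontriviality_excess_def)
  qed
  have "nonminimality \<delta> st p \<le> 0"
    unfolding nonminimality_def using unit_ball_nonempty excess_0 by (intro cSUP_least) auto
  then have "nonminimality \<delta> st p = 0"
    using nonminimality_nonneg[OF \<open>\<delta> > 0\<close>, where st = st and y = p] by linarith
  moreover have "unit_proj_defect st p = 0"
    using assms(2) unit_proj_defect_eq_0_iff unfolding minimal_projection_def by blast
  ultimately show ?thesis
    by (simp add: minproj_defect_def)
qed

lemma minimal_projection_if_minproj_defect_tendsto_0:
  assumes "\<delta> > 0" and lim: "y \<longlonglongrightarrow> l" and defect: "(\<lambda>k. minproj_defect \<delta> st (y k)) \<longlonglongrightarrow> 0"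
  shows "minimal_projection st l"
proof -
  have "unit_proj_defect st l \<le> 0"
  proof (rule LIMSEQ_le[OF tendsto_unit_proj_defect[OF lim] defect])
    show "\<exists>N. \<forall>k\<ge>N. unit_proj_defect st (y k) \<le> minproj_defect \<delta> st (y k)"
      using nonminimality_nonneg[OF \<open>\<delta> > 0\<close>] by (auto simp: minproj_defect_def)
  qed
  then have "is_projection st l" "l \<noteq> 0"
    using unit_proj_defect_nonneg[of st l] unit_proj_defect_eq_0_iff by auto
  have "q = 0 \<or> q = l" if q: "is_projection st q" "q * l = q" for q
  proof -
    have "norm q \<le> 1"
      using q(1) norm_projection_le_1 by blast
    have "nontriviality_excess \<delta> st q l \<le> 0"
    proof (rule LIMSEQ_le[OF tendsto_nontriviality_excess[OF lim] defect])
      show "\<exists>N. \<forall>k\<ge>N. nontriviality_excess \<delta> st q (y k) \<le> minproj_defect \<delta> st (y k)"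
        unfolding minproj_defect_def
        using nontriviality_excess_le_nonminimality[OF \<open>\<delta> > 0\<close> \<open>norm q \<le> 1\<close>] unit_proj_defect_nonneg
        by (intro exI[of _ 0] allI impI add_increasing) auto
    qed
    moreover have "subproj_defect st q l = 0"
      using q subproj_defect_eq_0_iff by blast
    ultimately have "dist_trivial q l \<le> 1/2"
      by (simp add: nontriviality_excess_def)
    then show ?thesis
      using trivial_if_dist_trivial_le_half[OF q(1) \<open>is_projection st l\<close> q(2)] by blast
  qed
  then show ?thesis
    unfolding minimal_projection_def using \<open>is_projection st l\<close> \<open>l \<noteq> 0\<close> by blast
qed

end

section \<open>Approximating the distance to the minimal projections\<close>

lemma tendsto_0_if_real_of_nat_mult_bounded:
  fixes f :: "nat \<Rightarrow> real"
  assumes "\<And>K. f K \<ge> 0" "\<And>K. real K * f K \<le> C"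
  shows "f \<longlonglongrightarrow> 0"
proof (rule Lim_null_comparison)
  show "\<forall>\<^sub>F K in sequentially. norm (f K) \<le> C / real K"
  proof (rule eventually_sequentiallyI[of 1])
    fix K :: nat
    assume "K \<ge> 1"
    then show "norm (f K) \<le> C / real K"
      using assms[of K] by (simp add: field_simps)
  qed
  show "(\<lambda>K. C / real K) \<longlonglongrightarrow> 0"
    by (rule lim_const_over_n)
qed

context fin_dim_cstar_algebra
begin

lemma subproj_threshold_exists: "\<exists>\<delta>. subproj_threshold \<delta> st"
proof (rule ccontr)
  assume no_threshold: "\<nexists>\<delta>. subproj_threshold \<delta> st"
  have "\<exists>p q. minimal_projection st p \<and> norm q \<le> 1 \<and>
      subproj_defect st q p \<le> inverse (real (Suc k)) \<and> dist_trivial q p > 1/2" for k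
  proof -
    have "\<not> subproj_threshold (inverse (real (Suc k))) st"
      using no_threshold by blast
    then show ?thesis
      unfolding subproj_threshold_def by (force simp: not_le)
  qed
  then obtain p q where min: "\<And>k. minimal_projection st (p k)" and q_norm: "\<And>k. norm (q k) \<le> 1"
    and defect: "\<And>k. subproj_defect st (q k) (p k) \<le> inverse (real (Suc k))"
    and far: "\<And>k. dist_trivial (q k) (p k) > 1/2"
    by metis
  have "bounded (range p)" "bounded (range q)"
    using min norm_minimal_projection q_norm unfolding bounded_iff by (metis rangeE order_refl)+
  then obtain r p0 q0 where r: "strict_mono r" "(p \<circ> r) \<longlonglongrightarrow> p0" "(q \<circ> r) \<longlonglongrightarrow> q0"
    by (rule bounded_seqs_convergent_subseq)
  have "minimal_projection st p0"
    using minimal_projection_limit[OF _ r(2)] min by simp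
  have "subproj_defect st q0 p0 \<le> 0"
  proof (rule LIMSEQ_le[OF tendsto_subproj_defect[OF r(3) r(2)]])
    show "(\<lambda>k. inverse (real (Suc (r k)))) \<longlonglongrightarrow> 0"
      using LIMSEQ_subseq_LIMSEQ[OF LIMSEQ_inverse_real_of_nat r(1)] by (simp add: o_def)
    show "\<exists>N. \<forall>k\<ge>N. subproj_defect st ((q \<circ> r) k) ((p \<circ> r) k) \<le> inverse (real (Suc (r k)))"
      using defect by simp
  qed
  then have "is_projection st q0" "q0 * p0 = q0"
    using subproj_defect_nonneg[of st q0 p0] subproj_defect_eq_0_iff by auto
  then have "q0 = 0 \<or> q0 = p0"
    using \<open>minimal_projection st p0\<close> unfolding minimal_projection_def by blast
  then have "dist_trivial q0 p0 = 0"
    by (auto simp: dist_trivial_def)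
  moreover have "dist_trivial q0 p0 \<ge> 1/2"
    using far by (intro LIMSEQ_le[OF tendsto_const tendsto_dist_trivial[OF r(3) r(2)]])
      (auto intro: less_imp_le)
  ultimately show False
    by simp
qed

lemma penalized_dist_le_rho_min:
  assumes "subproj_threshold \<delta> st"
  shows "penalized_dist \<delta> K st x \<le> rho_min st x"
proof -
  have "\<delta> > 0"
    using assms unfolding subproj_threshold_def by blast
  have bdd: "bdd_below ((\<lambda>y. norm (x - y) + real K * minproj_defect \<delta> st y) ` {y. norm y \<le> 1})"
    by (rule bdd_belowI2[of _ 0]) (simp add: minproj_defect_nonneg[OF \<open>\<delta> > 0\<close>])
  have "penalized_dist \<delta> K st x \<le> norm (x - p)" if "minimal_projection st p" for p
  proof -
    have "penalized_dist \<delta> K st x \<le> norm (x - p) + real K * minproj_defect \<delta> st p"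
      unfolding penalized_dist_def
      using norm_minimal_projection[OF that] by (intro cINF_lower[OF bdd]) simp
    then show ?thesis
      using minproj_defect_minimal_projection[OF assms that] by simp
  qed
  then show ?thesis
    unfolding rho_min_def using minimal_projection_exists by (intro cInf_greatest) auto
qed

lemma subseq_limit_minimal_if_minproj_defect_tendsto_0:
  fixes x y :: "nat \<Rightarrow> 'a"
  assumes "\<delta> > 0" "bounded (range x)" "\<And>k. norm (y k) \<le> 1"
    and defect: "(\<lambda>k. minproj_defect \<delta> st (y k)) \<longlonglongrightarrow> 0"
  obtains r x0 y0 where "strict_mono r" "(x \<circ> r) \<longlonglongrightarrow> x0" "(y \<circ> r) \<longlonglongrightarrow> y0" "minimal_projection st y0"
proof -
  have "bounded (range y)"
    using assms(3) unfolding bounded_iff by auto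
  then obtain r x0 y0 where r: "strict_mono r" "(x \<circ> r) \<longlonglongrightarrow> x0" "(y \<circ> r) \<longlonglongrightarrow> y0"
    using bounded_seqs_convergent_subseq[OF assms(2)] by blast
  have "(\<lambda>k. minproj_defect \<delta> st ((y \<circ> r) k)) \<longlonglongrightarrow> 0"
    using LIMSEQ_subseq_LIMSEQ[OF defect r(1)] by (simp add: o_def)
  then have "minimal_projection st y0"
    by (rule minimal_projection_if_minproj_defect_tendsto_0[OF \<open>\<delta> > 0\<close> r(3)])
  then show thesis
    using that r by blast
qed

lemma rho_min_le_penalized_dist:
  assumes "subproj_threshold \<delta> st" "\<epsilon> > 0"
  shows "\<exists>K. \<forall>x. norm x \<le> R \<longrightarrow> rho_min st x \<le> penalized_dist \<delta> K st x + \<epsilon>"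
proof (rule ccontr)
  assume "\<not> ?thesis"
  then have "\<forall>K. \<exists>x. norm x \<le> R \<and> penalized_dist \<delta> K st x < rho_min st x - \<epsilon>"
    by (simp add: not_le less_diff_eq)
  then obtain x where x_norm: "\<And>K. norm (x K) \<le> R"
    and x_far: "\<And>K. penalized_dist \<delta> K st (x K) < rho_min st (x K) - \<epsilon>"
    by metis
  have "\<delta> > 0"
    using assms unfolding subproj_threshold_def by blast
  have "\<exists>y. norm y \<le> 1 \<and> norm (x K - y) + real K * minproj_defect \<delta> st y < rho_min st (x K) - \<epsilon>" for K
  proof -
    have bdd: "bdd_below ((\<lambda>y. norm (x K - y) + real K * minproj_defect \<delta> st y) ` {y. norm y \<le> 1})"
      by (rule bdd_belowI2[of _ 0]) (simp add: minproj_defect_nonneg[OF \<open>\<delta> > 0\<close>])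
    show ?thesis
      using cINF_less_iff[OF unit_ball_nonempty bdd, of "rho_min st (x K) - \<epsilon>"] x_far[of K]
      unfolding penalized_dist_def by auto
  qed
  then obtain y where y_norm: "\<And>K. norm (y K) \<le> 1"
    and y_close: "\<And>K. norm (x K - y K) + real K * minproj_defect \<delta> st (y K) < rho_min st (x K) - \<epsilon>"
    by metis
  obtain p0 where "minimal_projection st p0"
    using minimal_projection_exists by blast
  have rho_bound: "rho_min st (x K) \<le> R + 1" for K
    using rho_min_le_norm_diff[OF \<open>minimal_projection st p0\<close>, of "x K"] norm_triangle_ineq4[of "x K" p0]
      x_norm[of K] norm_minimal_projection[OF \<open>minimal_projection st p0\<close>] by linarith
  have "(\<lambda>K. minproj_defect \<delta> st (y K)) \<longlonglongrightarrow> 0"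
  proof (rule tendsto_0_if_real_of_nat_mult_bounded)
    show "minproj_defect \<delta> st (y K) \<ge> 0" for K
      by (rule minproj_defect_nonneg[OF \<open>\<delta> > 0\<close>])
    show "real K * minproj_defect \<delta> st (y K) \<le> R + 1" for K
      using y_close[of K] rho_bound[of K] \<open>\<epsilon> > 0\<close> norm_ge_zero[of "x K - y K"] by linarith
  qed
  moreover have "bounded (range x)"
    using x_norm unfolding bounded_iff by auto
  ultimately obtain r x0 y0 where r: "strict_mono r" "(x \<circ> r) \<longlonglongrightarrow> x0" "(y \<circ> r) \<longlonglongrightarrow> y0"
    and "minimal_projection st y0"
    using subseq_limit_minimal_if_minproj_defect_tendsto_0[where x = x and y = y, OF \<open>\<delta> > 0\<close> _ y_norm]
    by blast
  have close: "norm (x K - y K) + \<epsilon> \<le> norm (x K - y0)" for K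
    using y_close[of K] rho_min_le_norm_diff[OF \<open>minimal_projection st y0\<close>, of "x K"]
      minproj_defect_nonneg[OF \<open>\<delta> > 0\<close>, where y = "y K"] by (smt (verit) of_nat_0_le_iff mult_nonneg_nonneg)
  have "(\<lambda>k. norm ((x \<circ> r) k - (y \<circ> r) k) + \<epsilon>) \<longlonglongrightarrow> norm (x0 - y0) + \<epsilon>"
    by (intro tendsto_intros r(2,3))
  moreover have "(\<lambda>k. norm ((x \<circ> r) k - y0)) \<longlonglongrightarrow> norm (x0 - y0)"
    by (intro tendsto_intros r(2))
  ultimately have "norm (x0 - y0) + \<epsilon> \<le> norm (x0 - y0)"
    by (rule LIMSEQ_le) (use close in auto)
  then show False
    using \<open>\<epsilon> > 0\<close> by simp
qed

end

definition tm_diff :: "tm \<Rightarrow> tm \<Rightarrow> tm" where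
  "tm_diff s t = Add s (Smult (- 1) t)"

definition fm_proj_defect :: "tm \<Rightarrow> fm" where
  "fm_proj_defect t = Bin (+) (Atom (tm_diff (Mult t t) t)) (Atom (tm_diff (Star t) t))"

definition fm_unit_proj_defect :: fm where
  "fm_unit_proj_defect = Bin (+) (fm_proj_defect (Var 0)) (FUn (\<lambda>r. \<bar>1 - r\<bar>) (Atom (Var 0)))"

definition fm_subproj_defect :: fm where
  "fm_subproj_defect = Bin (+) (fm_proj_defect (Var 0)) (Atom (tm_diff (Mult (Var 0) (Var 1)) (Var 0)))"

definition fm_dist_trivial :: fm where
  "fm_dist_trivial = Bin min (Atom (Var 0)) (Atom (tm_diff (Var 0) (Var 1)))"

definition fm_nontriviality_excess :: "real \<Rightarrow> fm" where
  "fm_nontriviality_excess \<delta> = Bin (\<lambda>a b. max 0 (a - 1/2 - b / \<delta>)) fm_dist_trivial fm_subproj_defect"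

definition fm_minproj_defect :: "real \<Rightarrow> fm" where
  "fm_minproj_defect \<delta> = Bin (+) fm_unit_proj_defect (FSup 1 (fm_nontriviality_excess \<delta>))"

definition fm_penalized_dist :: "real \<Rightarrow> nat \<Rightarrow> fm" where
  "fm_penalized_dist \<delta> K =
     FInf 1 (Bin (\<lambda>a b. a + real K * b) (Atom (tm_diff (Var 1) (Var 0))) (fm_minproj_defect \<delta>))"

lemma wf_fm_penalized_dist: "wf_fm (fm_penalized_dist \<delta> K)"
  unfolding fm_penalized_dist_def fm_minproj_defect_def fm_nontriviality_excess_def
    fm_dist_trivial_def fm_subproj_defect_def fm_unit_proj_defect_def fm_proj_defect_def
    wf_fm.simps case_prod_unfold divide_inverse
  by (intro conjI TrueI continuous_intros)

context cstar_algebra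
begin

lemma tm_eval_diff [simp]:
  "tm_eval st cs env (tm_diff s t) = tm_eval st cs env s - tm_eval st cs env t"
  using cs_of_real[of "- 1" "tm_eval st cs env t"] by (simp add: tm_diff_def)

lemma fm_eval_proj_defect: "fm_eval st cs env (fm_proj_defect t) = proj_defect st (tm_eval st cs env t)"
  by (simp add: fm_proj_defect_def proj_defect_def)

lemma fm_eval_minproj_defect:
  "fm_eval st cs (case_nat y env) (fm_minproj_defect \<delta>) = minproj_defect \<delta> st y"
  by (simp add: fm_minproj_defect_def fm_unit_proj_defect_def fm_nontriviality_excess_def
      fm_dist_trivial_def fm_subproj_defect_def fm_eval_proj_defect minproj_defect_def
      unit_proj_defect_def nonminimality_def nontriviality_excess_def dist_trivial_def
      subproj_defect_def)

lemma fm_eval_penalized_dist: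
  "fm_eval st cs (case_nat x env) (fm_penalized_dist \<delta> K) = penalized_dist \<delta> K st x"
  by (simp add: fm_penalized_dist_def fm_eval_minproj_defect penalized_dist_def)

end

theorem theorem2p4:
  fixes st :: "'a::{real_normed_algebra_1,banach} \<Rightarrow> 'a" and cs :: "complex \<Rightarrow> 'a \<Rightarrow> 'a"
  assumes "fin_dim_cstar st cs"
  shows "definable_in st cs (rho_min st)"
proof -
  interpret fin_dim_cstar_algebra st cs
    using assms by unfold_locales
  obtain \<delta> where \<delta>: "subproj_threshold \<delta> st"
    using subproj_threshold_exists by blast
  show ?thesis
    unfolding definable_in_def
  proof (intro allI impI)
    fix n :: nat and \<epsilon> :: real
    assume "\<epsilon> > 0"
    then obtain K where K: "\<And>x. norm x \<le> real n \<Longrightarrow> rho_min st x \<le> penalized_dist \<delta> K st x + \<epsilon>"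
      using rho_min_le_penalized_dist[OF \<delta>] by blast
    have "\<bar>fm_eval st cs (case_nat x env) (fm_penalized_dist \<delta> K) - rho_min st x\<bar> \<le> \<epsilon>"
      if "norm x \<le> real n" for x env
      using K[OF that] penalized_dist_le_rho_min[OF \<delta>, of K x] by (simp add: fm_eval_penalized_dist)
    then show "\<exists>\<phi>. wf_fm \<phi> \<and> (\<forall>x env. norm x \<le> real n \<longrightarrow>
        \<bar>fm_eval st cs (case_nat x env) \<phi> - rho_min st x\<bar> \<le> \<epsilon>)"
      using wf_fm_penalized_dist by blast
  qed
qed

end
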